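(* Let $M^*\in[0,1]^{n_1\times n_2}$ have non-decreasing columns (i.e. $M^*_{i,j}\le M^*_{i+1,j}$), let $N>0$, $\zeta\ge0$, let $B$ be a nonempty subset of $[n_2]$ and \[ \eta_B=16(\zeta+1)\Big(\sqrt{\frac{|B|n_1n_2}{N}\log(n_1n_2)}+\frac{n_1n_2}{N}\log(n_1n_2)\Big). \] Suppose $\widehat\pi$ is a topological sort of a directed graph $G$ on $[n_1]$ in which an edge $u\to v$ is present whenever $\sum_{\ell\in B}M^*_{v,\ell}-\sum_{\ell\in B}M^*_{u,\ell}>2\eta_B$. Then for all $i\in[n_1]$, \[ \sum_{j\in B}|M^*_{\widehat\pi(i),j}-M^*_{i,j}|\le96(\zeta+1)\sqrt{\frac{n_1n_2}{N}|B|\log(n_1n_2)}. \]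
   Context: A permutation $\pi$ of $[n_1]$ is a topological sort of a directed graph $G$ on $[n_1]$ if $\pi(u)<\pi(v)$ for every directed edge $u\to v$. Logarithms natural. *)

theory Defs
  imports Complex_Main
begin

definition topological_sort :: "nat \<Rightarrow> (nat \<Rightarrow> nat \<Rightarrow> bool) \<Rightarrow> (nat \<Rightarrow> nat) \<Rightarrow> bool" where
  "topological_sort n G \<pi> \<longleftrightarrow>
     bij_betw \<pi> {1..n} {1..n} \<and> (\<forall>u\<in>{1..n}. \<forall>v\<in>{1..n}. G u v \<longrightarrow> \<pi> u < \<pi> v)"

end

theory Submission
  imports Defs
begin

text \<open>Write \<open>S u\<close> for the row sum of \<open>M\<close> over \<open>B\<close> and \<open>T = 2\<eta>\<^sub>B\<close>; monotone columns make \<open>S\<close>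
  non-decreasing. If \<open>S (\<pi> i) > S i + T\<close>, then \<open>G\<close> has an edge from \<open>i\<close> to every row
  \<open>v \<ge> \<pi> i\<close>, so the bijection \<open>\<pi>\<close> would map these \<open>n\<^sub>1 - \<pi> i + 1\<close> rows into the \<open>n\<^sub>1 - \<pi> i\<close>
  positions above \<open>\<pi> i\<close>; symmetrically \<open>S (\<pi> i) \<ge> S i - T\<close>. Monotone columns also make the
  left-hand side equal to \<open>\<bar>S (\<pi> i) - S i\<bar>\<close>, which is thus at most \<open>T\<close> and trivially at most
  \<open>|B|\<close>; comparing \<open>|B|\<close> with \<open>n\<^sub>1n\<^sub>2 log(n\<^sub>1n\<^sub>2)/N\<close> bounds \<open>min T |B|\<close> by the right-hand side.\<close>

lemma mono_on_atLeastAtMost_SucI: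
  fixes f :: "nat \<Rightarrow> 'a::order"
  assumes "\<And>i. 1 \<le> i \<Longrightarrow> i < n \<Longrightarrow> f i \<le> f (Suc i)"
  shows "mono_on {1..n} f"
proof (rule mono_onI)
  fix r s assume r: "r \<in> {1..n}" and "s \<in> {1..n}" "r \<le> s"
  from \<open>r \<le> s\<close> \<open>s \<in> {1..n}\<close> show "f r \<le> f s"
  proof (induction s rule: dec_induct)
    case (step m)
    then show ?case using assms[of m] r by (auto intro: order_trans)
  qed simp
qed

lemma inj_on_atLeastAtMost_exists_le:
  fixes \<pi> :: "nat \<Rightarrow> nat"
  assumes "inj_on \<pi> {k..n}" and "\<pi> ` {k..n} \<subseteq> {1..n}" and "k \<le> n"
  shows "\<exists>v\<in>{k..n}. \<pi> v \<le> k"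
proof (rule ccontr)
  assume "\<not> ?thesis"
  then have "\<pi> ` {k..n} \<subseteq> {Suc k..n}"
    using assms(2) by (auto simp: image_subset_iff not_le Suc_le_eq)
  then have "card {k..n} \<le> card {Suc k..n}"
    using assms(1) by (intro card_inj_on_le) auto
  then show False using assms(3) by simp
qed

lemma inj_on_atLeastAtMost_exists_ge:
  fixes \<pi> :: "nat \<Rightarrow> nat"
  assumes "inj_on \<pi> {1..k}" and "\<pi> ` {1..k} \<subseteq> {1..n}" and "1 \<le> k"
  shows "\<exists>v\<in>{1..k}. k \<le> \<pi> v"
proof (rule ccontr)
  assume "\<not> ?thesis"
  then have "\<pi> ` {1..k} \<subseteq> {1..<k}"
    using assms(2) by (auto simp: image_subset_iff not_le Suc_le_eq)
  then have "card {1..k} \<le> card {1..<k}"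
    using assms(1) by (intro card_inj_on_le) auto
  then show False using assms(3) by simp
qed

lemma topological_sort_displacement:
  fixes f :: "nat \<Rightarrow> real"
  assumes topo: "topological_sort n G \<pi>"
    and mono: "mono_on {1..n} f"
    and edges: "\<And>u v. u \<in> {1..n} \<Longrightarrow> v \<in> {1..n} \<Longrightarrow> f v - f u > T \<Longrightarrow> G u v"
    and i: "i \<in> {1..n}"
  shows "\<bar>f (\<pi> i) - f i\<bar> \<le> T"
proof -
  have bij: "bij_betw \<pi> {1..n} {1..n}"
    and sorted: "\<And>u v. u \<in> {1..n} \<Longrightarrow> v \<in> {1..n} \<Longrightarrow> G u v \<Longrightarrow> \<pi> u < \<pi> v"
    using topo unfolding topological_sort_def by auto
  define k where "k = \<pi> i"
  have k: "k \<in> {1..n}" using bij i unfolding k_def by (metis bij_betwE)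
  have inj: "inj_on \<pi> A" and maps: "\<pi> ` A \<subseteq> {1..n}" if "A \<subseteq> {1..n}" for A
    using that bij by (auto simp: bij_betw_def intro: inj_on_subset)
  have "f k \<le> f i + T"
  proof (rule ccontr)
    assume above: "\<not> ?thesis"
    obtain v where v: "v \<in> {k..n}" "\<pi> v \<le> k"
      using inj_on_atLeastAtMost_exists_le[OF inj maps[of "{k..n}"]] k by auto
    have "f k \<le> f v" using mono v k by (auto elim: mono_onD)
    moreover have v1: "v \<in> {1..n}" using v k by auto
    ultimately have "G i v" using edges i above by auto
    then have "k < \<pi> v" using sorted[OF i v1] unfolding k_def by simp
    with v show False by simp
  qed
  moreover have "f i - T \<le> f k"
  proof (rule ccontr)
    assume below: "\<not> ?thesis"
    obtain v where v: "v \<in> {1..k}" "k \<le> \<pi> v"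
      using inj_on_atLeastAtMost_exists_ge[OF inj maps[of "{1..k}"]] k by auto
    have "f v \<le> f k" using mono v k by (auto elim: mono_onD)
    moreover have v1: "v \<in> {1..n}" using v k by auto
    ultimately have "G v i" using edges i below by auto
    then have "\<pi> v < k" using sorted[OF v1 i] unfolding k_def by simp
    with v show False by simp
  qed
  ultimately show ?thesis unfolding k_def by linarith
qed

lemma sum_abs_eq_abs_sum_same_sign:
  fixes g :: "'a \<Rightarrow> 'b::linordered_idom"
  assumes "(\<forall>j\<in>B. 0 \<le> g j) \<or> (\<forall>j\<in>B. g j \<le> 0)"
  shows "(\<Sum>j\<in>B. \<bar>g j\<bar>) = \<bar>\<Sum>j\<in>B. g j\<bar>"
  using assms
proof
  assume "\<forall>j\<in>B. 0 \<le> g j"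
  then show ?thesis by (simp add: sum_nonneg)
next
  assume nonpos: "\<forall>j\<in>B. g j \<le> 0"
  then have "(\<Sum>j\<in>B. \<bar>g j\<bar>) = - (\<Sum>j\<in>B. g j)" by (simp add: sum_negf[symmetric])
  also have "\<dots> = \<bar>\<Sum>j\<in>B. g j\<bar>" using nonpos by (simp add: sum_nonpos)
  finally show ?thesis .
qed

lemma sum_abs_row_diff_eq_abs_diff_row_sums:
  fixes M :: "'a::linorder \<Rightarrow> 'b \<Rightarrow> real"
  assumes "\<And>j. j \<in> B \<Longrightarrow> mono_on A (\<lambda>u. M u j)" and "i \<in> A" and "k \<in> A"
  shows "(\<Sum>j\<in>B. \<bar>M k j - M i j\<bar>) = \<bar>(\<Sum>j\<in>B. M k j) - (\<Sum>j\<in>B. M i j)\<bar>"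
proof -
  have "(\<forall>j\<in>B. M i j \<le> M k j) \<or> (\<forall>j\<in>B. M k j \<le> M i j)"
    using assms by (cases "i \<le> k") (auto intro: mono_onD[OF assms(1)])
  then show ?thesis unfolding sum_subtractf[symmetric]
    by (intro sum_abs_eq_abs_sum_same_sign) auto
qed

lemma le_two_mult_sqrt_of_le_min:
  fixes D a c x :: real
  assumes "D \<le> a * (sqrt (c * x) + x)" and "D \<le> c"
    and "1 \<le> a" and "0 \<le> c" and "0 \<le> x"
  shows "D \<le> 2 * a * sqrt (c * x)"
proof (cases "x \<le> c")
  case True
  then have "x \<le> sqrt (c * x)"
    using \<open>0 \<le> x\<close> by (simp add: real_le_rsqrt power2_eq_square mult_right_mono)
  then have "a * (sqrt (c * x) + x) \<le> a * (2 * sqrt (c * x))"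
    using \<open>1 \<le> a\<close> by (intro mult_left_mono) auto
  then show ?thesis using assms(1) by simp
next
  case False
  then have "c \<le> sqrt (c * x)"
    using \<open>0 \<le> c\<close> by (simp add: real_le_rsqrt power2_eq_square mult_left_mono)
  also have "\<dots> \<le> 2 * a * sqrt (c * x)"
    using assms(3-5) mult_right_mono[of 1 "2 * a" "sqrt (c * x)"] by simp
  finally show ?thesis using assms(2) by simp
qed

theorem lemma10:
  fixes M :: "nat \<Rightarrow> nat \<Rightarrow> real" and n1 n2 :: nat and N \<zeta> :: real
    and B :: "nat set" and G :: "nat \<Rightarrow> nat \<Rightarrow> bool" and \<pi> :: "nat \<Rightarrow> nat"
  assumes range01: "\<forall>i\<in>{1..n1}. \<forall>j\<in>{1..n2}. 0 \<le> M i j \<and> M i j \<le> 1"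
    and cols_mono: "\<forall>i j. 1 \<le> i \<and> i < n1 \<and> j \<in> {1..n2} \<longrightarrow> M i j \<le> M (i + 1) j"
    and N_pos: "N > 0" and zeta_nonneg: "\<zeta> \<ge> 0"
    and B_sub: "B \<subseteq> {1..n2}" and B_ne: "B \<noteq> {}"
    and edges: "\<forall>u\<in>{1..n1}. \<forall>v\<in>{1..n1}.
        (\<Sum>l\<in>B. M v l) - (\<Sum>l\<in>B. M u l) >
          2 * (16 * (\<zeta> + 1) * (sqrt (real (card B) * real n1 * real n2 / N * ln (real n1 * real n2))
                 + real n1 * real n2 / N * ln (real n1 * real n2)))
        \<longrightarrow> G u v"
    and topo: "topological_sort n1 G \<pi>"
  shows "\<forall>i\<in>{1..n1}. (\<Sum>j\<in>B. \<bar>M (\<pi> i) j - M i j\<bar>)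
           \<le> 96 * (\<zeta> + 1) * sqrt (real n1 * real n2 / N * real (card B) * ln (real n1 * real n2))"
proof
  fix i assume i: "i \<in> {1..n1}"
  define c where "c = real (card B)"
  define x where "x = real n1 * real n2 / N * ln (real n1 * real n2)"
  define T where "T = 2 * (16 * (\<zeta> + 1) * (sqrt (c * x) + x))"
  define S where "S u = (\<Sum>l\<in>B. M u l)" for u
  define D where "D = (\<Sum>j\<in>B. \<bar>M (\<pi> i) j - M i j\<bar>)"
  have k: "\<pi> i \<in> {1..n1}" using topo i unfolding topological_sort_def by (metis bij_betwE)
  have col_mono: "mono_on {1..n1} (\<lambda>u. M u j)" if "j \<in> B" for j
    using cols_mono B_sub that by (intro mono_on_atLeastAtMost_SucI) auto
  have "mono_on {1..n1} S"
    unfolding S_def by (intro mono_onI sum_mono) (simp add: mono_onD[OF col_mono])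
  moreover have "G u v" if "u \<in> {1..n1}" "v \<in> {1..n1}" "S v - S u > T" for u v
    using edges that unfolding S_def T_def c_def x_def by (simp add: mult.assoc)
  ultimately have "\<bar>S (\<pi> i) - S i\<bar> \<le> T"
    using i by (intro topological_sort_displacement[OF topo])
  moreover have "D = \<bar>S (\<pi> i) - S i\<bar>"
    unfolding D_def S_def using col_mono i k by (rule sum_abs_row_diff_eq_abs_diff_row_sums)
  ultimately have D_T: "D \<le> 2 * (16 * (\<zeta> + 1)) * (sqrt (c * x) + x)"
    by (simp only: T_def mult.assoc)
  have "\<bar>M (\<pi> i) j - M i j\<bar> \<le> 1" if "j \<in> B" for j
    using range01[rule_format, OF i] range01[rule_format, OF k] B_sub that
    by (smt (verit) subsetD)
  then have "D \<le> (\<Sum>j\<in>B. 1)" unfolding D_def by (intro sum_mono)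
  then have D_c: "D \<le> c" unfolding c_def by simp
  have "1 \<le> n1" "1 \<le> n2" using i B_sub B_ne by auto
  then have "1 \<le> real n1 * real n2" using mult_mono[of 1 "real n1" 1 "real n2"] by simp
  then have "0 \<le> x" unfolding x_def using N_pos by simp
  then have "D \<le> 2 * (2 * (16 * (\<zeta> + 1))) * sqrt (c * x)"
    using le_two_mult_sqrt_of_le_min[OF D_T D_c] zeta_nonneg unfolding c_def by simp
  also have "\<dots> \<le> 96 * (\<zeta> + 1) * sqrt (c * x)"
    using zeta_nonneg \<open>0 \<le> x\<close> unfolding c_def by (intro mult_right_mono) auto
  finally show "D \<le> 96 * (\<zeta> + 1) * sqrt (real n1 * real n2 / N * real (card B) * ln (real n1 * real n2))"
    unfolding c_def x_def by (simp add: ac_simps)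
qed

end
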